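(* Let $n\ge 2$ and let $\Delta^c(Q_{4n})$ be the conjugacy super commuting graph of the generalized quaternion group $Q_{4n}$. (i) If $n$ is odd, the Sombor spectrum of $\Delta^c(Q_{4n})$ consists of $-(4n-1)\sqrt2$ with multiplicity $1$, $-(2n-1)\sqrt2$ with multiplicity $2n-3$, $-(2n+1)\sqrt2$ with multiplicity $2n-1$, and the three roots (with multiplicity) of \[\big(x-(4n-1)\sqrt2\big)\big(x-(2n-1)(2n-3)\sqrt2\big)\big(x-(2n-1)(2n+1)\sqrt2\big)-8(n-1)(10n^2-6n+1)\big(x-(2n-1)(2n+1)\sqrt2\big)-8n(10n^2-2n+1)\big(x-(2n-1)(2n-3)\sqrt2\big).\] (ii) If $n$ is even, the Sombor spectrum of $\Delta^c(Q_{4n})$ consists of $-(4n-1)\sqrt2$ with multiplicity $1$, $-(2n-1)\sqrt2$ with multiplicity $2n-3$, $-(n+1)\sqrt2$ with multiplicity $2n-2$, and the four roots (with multiplicity) of \[\big(x-(4n-1)\sqrt2\big)\big(x-(n-1)(n+1)\sqrt2\big)^2\big(x-(2n-1)(2n-3)\sqrt2\big)-8(n-1)(10n^2-6n+1)\big(x-(n-1)(n+1)\sqrt2\big)^2-4n(17n^2-6n+2)\big(x-(2n-3)(2n-1)\sqrt2\big)\big(x-(n-1)(n+1)\sqrt2\big).\]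
   Context: For a finite simple graph $\Gamma$ with vertices $u_1,\dots,u_N$, the Sombor matrix $S(\Gamma)$ has $(i,j)$ entry $\sqrt{\deg(u_i)^2+\deg(u_j)^2}$ if $u_i,u_j$ are adjacent and $0$ otherwise; the Sombor spectrum is the multiset of its eigenvalues. $Q_{4n}=\langle a,b: a^{2n}=e,\ a^n=b^2,\ ba=a^{-1}b\rangle$. The conjugacy super commuting graph $\Delta^c(G)$ has vertex set $G$, and distinct $g,h$ are adjacent iff $g,h$ are conjugate in $G$ or there exist distinct $g'$ conjugate to $g$ and $h'$ conjugate to $h$ with $g'h'=h'g'$. *)

theory Defs
  imports "HOL-Algebra.Generated_Groups" "Jordan_Normal_Form.Char_Poly"
begin

definition graph_deg :: "'v set \<Rightarrow> ('v \<Rightarrow> 'v \<Rightarrow> bool) \<Rightarrow> 'v \<Rightarrow> nat" where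
  "graph_deg V E v = card {u \<in> V. E v u}"

text \<open>A fixed (arbitrary) enumeration u_0, ..., u_(N-1) of the vertex set.
  The Sombor spectrum does not depend on this choice.\<close>
definition vertex_enum :: "'v set \<Rightarrow> nat \<Rightarrow> 'v" where
  "vertex_enum V = (SOME f. bij_betw f {..<card V} V)"

definition sombor_matrix :: "'v set \<Rightarrow> ('v \<Rightarrow> 'v \<Rightarrow> bool) \<Rightarrow> real mat" where
  "sombor_matrix V E = mat (card V) (card V)
     (\<lambda>(i, j). let u = vertex_enum V i; w = vertex_enum V j in
        if E u w then sqrt (real (graph_deg V E u)^2 + real (graph_deg V E w)^2) else 0)"

definition sombor_spectrum :: "'v set \<Rightarrow> ('v \<Rightarrow> 'v \<Rightarrow> bool) \<Rightarrow> complex multiset" where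
  "sombor_spectrum V E = proots (char_poly (map_mat complex_of_real (sombor_matrix V E)))"

definition conj_in :: "('g, 'b) monoid_scheme \<Rightarrow> 'g \<Rightarrow> 'g \<Rightarrow> bool" where
  "conj_in G g h \<longleftrightarrow> g \<in> carrier G \<and> h \<in> carrier G \<and>
     (\<exists>x \<in> carrier G. h = x \<otimes>\<^bsub>G\<^esub> g \<otimes>\<^bsub>G\<^esub> inv\<^bsub>G\<^esub> x)"

definition csc_adj :: "('g, 'b) monoid_scheme \<Rightarrow> 'g \<Rightarrow> 'g \<Rightarrow> bool" where
  "csc_adj G g h \<longleftrightarrow> g \<in> carrier G \<and> h \<in> carrier G \<and> g \<noteq> h \<and>
     (conj_in G g h \<or>
      (\<exists>g' h'. conj_in G g g' \<and> conj_in G h h' \<and> g' \<noteq> h' \<and>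
               g' \<otimes>\<^bsub>G\<^esub> h' = h' \<otimes>\<^bsub>G\<^esub> g'))"

end

theory Submission
  imports Defs
begin

text \<open>
  The normal form a^i b^d of Q_4n shows that in the conjugacy super commuting graph the centre
  {1, a^n} is joined to every other vertex, the remaining powers of a form a clique, and the elements
  a^i b form one clique when n is odd and two cliques, according to the parity of i, when n is even;
  there are no other edges. A graph of this shape is described by a labelling of its vertices, and
  its Sombor matrix is a blow-up of a small matrix W of weights between label classes. Folding every
  vertex onto a representative of its class makes the Sombor matrix block triangular: a class i of
  size m_i contributes the eigenvalue -W_ii with multiplicity m_i - 1, and the remaining eigenvalues
  are those of the quotient matrix. Only the central class is joined to the other classes, so the
  quotient matrix is an arrowhead matrix, and its characteristic polynomial is the stated cubic
  (n odd) or quartic (n even).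
\<close>

section \<open>Reindexing, block triangular and blown-up matrices\<close>

lemma char_poly_mat_reindex:
  fixes F :: "'v \<Rightarrow> 'v \<Rightarrow> 'a::field"
  assumes f: "bij_betw f {..<N} V" and h: "bij_betw h {..<N} V"
  shows "char_poly (mat N N (\<lambda>(i, j). F (f i) (f j))) = char_poly (mat N N (\<lambda>(i, j). F (h i) (h j)))"
proof -
  define \<sigma> where "\<sigma> = (\<lambda>i. inv_into {..<N} h (f i))"
  have fV: "i < N \<Longrightarrow> f i \<in> V" for i using f by (auto simp: bij_betw_def)
  have \<sigma>N: "i < N \<Longrightarrow> \<sigma> i < N" for i
    unfolding \<sigma>_def using fV h by (metis bij_betw_def inv_into_into lessThan_iff)
  have h\<sigma>: "i < N \<Longrightarrow> h (\<sigma> i) = f i" for i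
    unfolding \<sigma>_def using fV h by (metis bij_betw_def f_inv_into_f)
  have \<sigma>_eq: "i < N \<Longrightarrow> j < N \<Longrightarrow> \<sigma> i = \<sigma> j \<longleftrightarrow> i = j" for i j
    using h\<sigma> f by (metis bij_betw_def inj_on_def lessThan_iff)
  define P where "P = mat N N (\<lambda>(i, j). of_bool (j = \<sigma> i) :: 'a)"
  define Q where "Q = mat N N (\<lambda>(i, j). of_bool (i = \<sigma> j) :: 'a)"
  have P: "P \<in> carrier_mat N N" and Q: "Q \<in> carrier_mat N N" unfolding P_def Q_def by auto
  have PQ: "P * Q = 1\<^sub>m N"
  proof (rule eq_matI)
    fix i j assume "i < dim_row (1\<^sub>m N :: 'a mat)" "j < dim_col (1\<^sub>m N :: 'a mat)"
    then have ij: "i < N" "j < N" by auto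
    show "(P * Q) $$ (i, j) = 1\<^sub>m N $$ (i, j)"
      using ij \<sigma>N \<sigma>_eq unfolding P_def Q_def by (auto simp: scalar_prod_def sum.If_cases)
  qed (auto simp: P_def Q_def)
  have QP: "Q * P = 1\<^sub>m N" by (rule mat_mult_left_right_inverse[OF P Q PQ])
  let ?A = "mat N N (\<lambda>(i, j). F (f i) (f j))"
  let ?B = "mat N N (\<lambda>(i, j). F (h i) (h j))"
  have AB: "?A = P * ?B * Q"
  proof (rule eq_matI)
    fix i j assume "i < dim_row (P * ?B * Q)" "j < dim_col (P * ?B * Q)"
    then have ij: "i < N" "j < N" unfolding P_def Q_def by auto
    have PB: "(P * ?B) $$ (i, l) = F (h (\<sigma> i)) (h l)" if "l < N" for l
      using ij that \<sigma>N unfolding P_def by (auto simp: scalar_prod_def sum.If_cases)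
    have "(P * ?B * Q) $$ (i, j) = F (h (\<sigma> i)) (h (\<sigma> j))"
      using ij PB \<sigma>N unfolding Q_def by (auto simp: scalar_prod_def P_def sum.If_cases)
    then show "?A $$ (i, j) = (P * ?B * Q) $$ (i, j)" using ij h\<sigma> by simp
  qed (auto simp: P_def Q_def)
  have "similar_mat ?A ?B"
    by (rule similar_matI[OF _ PQ QP AB]) (use P Q in auto)
  then show ?thesis by (rule char_poly_similar)
qed

lemma char_poly_four_block_lower_left_zero:
  fixes B :: "'a::idom mat"
  assumes B: "B \<in> carrier_mat k k" and C: "C \<in> carrier_mat k l" and D: "D \<in> carrier_mat l l"
  shows "char_poly (four_block_mat B C (0\<^sub>m l k) D) = char_poly B * char_poly D"
proof -
  have "char_poly_matrix (four_block_mat B C (0\<^sub>m l k) D) =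
      four_block_mat (char_poly_matrix B) (map_mat (\<lambda>a. [:- a:]) C) (0\<^sub>m l k) (char_poly_matrix D)"
    using B C D by (intro eq_matI) (auto simp: char_poly_matrix_def)
  then have "char_poly (four_block_mat B C (0\<^sub>m l k) D) =
      det (four_block_mat (char_poly_matrix B) (map_mat (\<lambda>a. [:- a:]) C) (0\<^sub>m l k) (char_poly_matrix D))"
    by (simp add: char_poly_def)
  also have "\<dots> = char_poly B * char_poly D"
    unfolding char_poly_def by (rule det_four_block_mat_lower_left_zero) (use B C D in auto)
  finally show ?thesis .
qed

lemma char_poly_diag_mat:
  "char_poly (mat n n (\<lambda>(i, j). if i = j then d i else (0::'a::comm_ring_1))) = (\<Prod>i<n. [:- d i, 1:])"
  unfolding char_poly_defs
  by (subst det_upper_triangular[of _ n]) (auto simp: prod_list_diag_prod upper_triangular_def atLeast0LessThan)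

text \<open>For classes of sizes m j whose distinct vertices of classes i and j are joined with weight W i j,
  entry (i, j) is the total weight from a vertex of class i to the other vertices of class j.\<close>
definition class_quotient_mat :: "nat \<Rightarrow> (nat \<Rightarrow> nat) \<Rightarrow> (nat \<Rightarrow> nat \<Rightarrow> 'a::ring_1) \<Rightarrow> 'a mat" where
  "class_quotient_mat k m W = mat k k (\<lambda>(i, j). of_nat (m j) * W i j - (if i = j then W i i else 0))"

lemma class_quotient_mat_diag:
  "i < k \<Longrightarrow> class_quotient_mat k m W $$ (i, i) = (of_nat (m i) - 1) * W i i"
  by (simp add: class_quotient_mat_def algebra_simps)

lemma class_quotient_mat_arm:
  fixes W :: "nat \<Rightarrow> nat \<Rightarrow> 'a::comm_ring_1"
  shows "j < k \<Longrightarrow> j \<noteq> 0 \<Longrightarrow> class_quotient_mat k m W $$ (0, j) * class_quotient_mat k m W $$ (j, 0) =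
    of_nat (m j) * of_nat (m 0) * (W 0 j * W j 0)"
  by (simp add: class_quotient_mat_def mult_ac)

lemma class_quotient_mat_eq_0:
  "i < k \<Longrightarrow> j < k \<Longrightarrow> i \<noteq> j \<Longrightarrow> W i j = 0 \<Longrightarrow> class_quotient_mat k m W $$ (i, j) = 0"
  by (simp add: class_quotient_mat_def)

definition class_fold_mat :: "nat \<Rightarrow> nat \<Rightarrow> (nat \<Rightarrow> nat) \<Rightarrow> 'a::ring_1 \<Rightarrow> 'a mat" where
  "class_fold_mat N k \<tau> c = mat N N (\<lambda>(s, p). if p = s then 1 else if k \<le> s \<and> p = \<tau> s then c else 0)"

lemma class_fold_mat_dim [simp]:
  "dim_row (class_fold_mat N k \<tau> c) = N" "dim_col (class_fold_mat N k \<tau> c) = N"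
  by (simp_all add: class_fold_mat_def)

lemma class_fold_mat_carrier [simp]: "class_fold_mat N k \<tau> c \<in> carrier_mat N N"
  by (rule carrier_matI) simp_all

lemma class_fold_mat_mult_entry:
  assumes \<tau>_lt: "\<And>s. s < N \<Longrightarrow> \<tau> s < k" and X: "X \<in> carrier_mat N n" and st: "s < N" "t < n"
  shows "(class_fold_mat N k \<tau> c * X) $$ (s, t) = X $$ (s, t) + (if k \<le> s then c * X $$ (\<tau> s, t) else 0)"
proof -
  have "(class_fold_mat N k \<tau> c * X) $$ (s, t) =
      (\<Sum>p\<in>{0..<N}. class_fold_mat N k \<tau> c $$ (s, p) * X $$ (p, t))"
    using X st by (simp add: scalar_prod_def)
  also have "\<dots> = (\<Sum>p\<in>{0..<N}. (if p = s then X $$ (p, t) else 0) +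
      (if p = \<tau> s then (if k \<le> s then c * X $$ (p, t) else 0) else 0))"
    using st \<tau>_lt[of s] by (intro sum.cong) (auto simp: class_fold_mat_def)
  also have "\<dots> = X $$ (s, t) + (if k \<le> s then c * X $$ (\<tau> s, t) else 0)"
    using st \<tau>_lt[of s] by (simp add: sum.distrib sum.delta)
  finally show ?thesis .
qed

lemma class_fold_mat_inverse:
  assumes \<tau>_lt: "\<And>s. s < N \<Longrightarrow> \<tau> s < k" and "k \<le> N"
  shows "class_fold_mat N k \<tau> 1 * class_fold_mat N k \<tau> (-1) = (1\<^sub>m N :: 'a::ring_1 mat)"
proof (rule eq_matI)
  let ?Q = "class_fold_mat N k \<tau> (-1) :: 'a mat"
  fix s t assume "s < dim_row (1\<^sub>m N :: 'a mat)" "t < dim_col (1\<^sub>m N :: 'a mat)"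
  then have st: "s < N" "t < N" by auto
  have \<tau>s: "\<tau> s < k" "\<tau> s < N" using st assms by (auto intro: less_le_trans)
  have "(class_fold_mat N k \<tau> 1 * ?Q) $$ (s, t) =
      ?Q $$ (s, t) + (if k \<le> s then 1 * ?Q $$ (\<tau> s, t) else 0)"
    by (rule class_fold_mat_mult_entry[OF \<tau>_lt class_fold_mat_carrier st])
  also have "\<dots> = 1\<^sub>m N $$ (s, t)"
    using st \<tau>s by (cases "k \<le> s") (auto simp: class_fold_mat_def)
  finally show "(class_fold_mat N k \<tau> 1 * ?Q) $$ (s, t) = 1\<^sub>m N $$ (s, t)" .
qed simp_all

lemma blowup_mult_class_fold_entry:
  fixes W :: "nat \<Rightarrow> nat \<Rightarrow> 'a::ring_1"
  assumes \<tau>_rep: "\<And>s. s < k \<Longrightarrow> \<tau> s = s" and \<tau>_lt: "\<And>s. s < N \<Longrightarrow> \<tau> s < k" and pt: "p < N" "t < N"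
  defines "M \<equiv> mat N N (\<lambda>(s, t). if s = t then 0 else W (\<tau> s) (\<tau> t))"
  shows "(M * class_fold_mat N k \<tau> 1) $$ (p, t) =
    (if t < k then (of_nat (card {s. s < N \<and> \<tau> s = t}) - of_bool (\<tau> p = t)) * W (\<tau> p) t else M $$ (p, t))"
proof (cases "t < k")
  case True
  have "(M * class_fold_mat N k \<tau> 1) $$ (p, t) =
      (\<Sum>q\<in>{0..<N}. if q \<in> {s. s < N \<and> \<tau> s = t} - {p} then W (\<tau> p) t else 0)"
    using pt True \<tau>_rep \<tau>_lt unfolding M_def class_fold_mat_def
    by (auto simp: scalar_prod_def intro!: sum.cong)
  also have "\<dots> = (\<Sum>q\<in>{0..<N} \<inter> ({s. s < N \<and> \<tau> s = t} - {p}). W (\<tau> p) t)"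
    by (rule sum.inter_restrict[symmetric]) simp
  also have "{0..<N} \<inter> ({s. s < N \<and> \<tau> s = t} - {p}) = {s. s < N \<and> \<tau> s = t} - {p}"
    by auto
  also have "(\<Sum>q\<in>{s. s < N \<and> \<tau> s = t} - {p}. W (\<tau> p) t) =
      of_nat (card ({s. s < N \<and> \<tau> s = t} - {p})) * W (\<tau> p) t"
    by simp
  also have "\<dots> = (of_nat (card {s. s < N \<and> \<tau> s = t}) - of_bool (\<tau> p = t)) * W (\<tau> p) t"
  proof (cases "\<tau> p = t")
    case True
    let ?A = "{s. s < N \<and> \<tau> s = t}"
    have "p \<in> ?A" using pt True by simp
    then have "card ?A = Suc (card (?A - {p}))" by (rule card.remove[rotated]) simp
    then show ?thesis using True by simp
  next
    case False
    then have "{s. s < N \<and> \<tau> s = t} - {p} = {s. s < N \<and> \<tau> s = t}" by auto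
    with False show ?thesis by simp
  qed
  finally show ?thesis using True by simp
next
  case False
  have P: "class_fold_mat N k \<tau> 1 $$ (q, t) = of_bool (q = t)" if "q < N" for q
    using that pt False \<tau>_lt[of q] by (auto simp: class_fold_mat_def)
  have "(M * class_fold_mat N k \<tau> 1) $$ (p, t) =
      (\<Sum>q\<in>{0..<N}. M $$ (p, q) * class_fold_mat N k \<tau> 1 $$ (q, t))"
    using pt by (simp add: M_def scalar_prod_def)
  also have "\<dots> = (\<Sum>q\<in>{0..<N}. M $$ (p, q) * of_bool (q = t))"
    by (rule sum.cong) (simp_all add: P)
  also have "{0..<N} \<inter> {q. q = t} = {t}" using pt by auto
  then have "(\<Sum>q\<in>{0..<N}. M $$ (p, q) * of_bool (q = t)) = M $$ (p, t)" by simp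
  finally show ?thesis using False by simp
qed

text \<open>Adding each column s \<ge> k to column \<tau> s and then subtracting row \<tau> s from row s
  makes the blown-up matrix block upper triangular, with the quotient matrix as its upper left block.\<close>
lemma blowup_similar_block_mat:
  fixes W :: "nat \<Rightarrow> nat \<Rightarrow> 'a::field"
  assumes kN: "k \<le> N" and \<tau>_rep: "\<And>s. s < k \<Longrightarrow> \<tau> s = s" and \<tau>_lt: "\<And>s. s < N \<Longrightarrow> \<tau> s < k"
  shows "similar_mat (mat N N (\<lambda>(s, t). if s = t then 0 else W (\<tau> s) (\<tau> t)))
    (four_block_mat (class_quotient_mat k (\<lambda>j. card {s. s < N \<and> \<tau> s = j}) W)
      (mat k (N - k) (\<lambda>(i, j). W i (\<tau> (j + k)))) (0\<^sub>m (N - k) k)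
      (mat (N - k) (N - k) (\<lambda>(i, j). if i = j then - W (\<tau> (i + k)) (\<tau> (i + k)) else 0)))"
    (is "similar_mat _ ?T")
proof -
  define M where "M = mat N N (\<lambda>(s, t). if s = t then 0 else W (\<tau> s) (\<tau> t))"
  define m where "m = (\<lambda>j. card {s. s < N \<and> \<tau> s = j})"
  define P where "P = (class_fold_mat N k \<tau> 1 :: 'a mat)"
  define Q where "Q = (class_fold_mat N k \<tau> (-1) :: 'a mat)"
  have M: "M \<in> carrier_mat N N" and P: "P \<in> carrier_mat N N" and Q: "Q \<in> carrier_mat N N"
    and T: "?T \<in> carrier_mat N N"
    using kN by (auto simp: M_def P_def Q_def class_quotient_mat_def)
  have PQ: "P * Q = 1\<^sub>m N" unfolding P_def Q_def by (rule class_fold_mat_inverse[OF \<tau>_lt kN])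
  have QP: "Q * P = 1\<^sub>m N" by (rule mat_mult_left_right_inverse[OF P Q PQ])
  have MP: "(M * P) $$ (p, t) =
      (if t < k then (of_nat (m t) - of_bool (\<tau> p = t)) * W (\<tau> p) t else M $$ (p, t))" if "p < N" "t < N" for p t
    using blowup_mult_class_fold_entry[OF \<tau>_rep \<tau>_lt that] unfolding M_def P_def m_def .
  have QMP: "Q * (M * P) = ?T"
  proof (rule eq_matI)
    fix s t assume "s < dim_row ?T" "t < dim_col ?T"
    then have st: "s < N" "t < N" using T by auto
    have \<tau>s: "\<tau> s < k" "\<tau> s < N" "\<tau> (\<tau> s) = \<tau> s" using \<tau>_lt[OF st(1)] \<tau>_rep kN by auto
    have "(Q * (M * P)) $$ (s, t) = (M * P) $$ (s, t) + (if k \<le> s then - 1 * (M * P) $$ (\<tau> s, t) else 0)"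
      unfolding Q_def by (rule class_fold_mat_mult_entry[OF \<tau>_lt _ st]) (use M P in auto)
    also have "\<dots> = ?T $$ (s, t)"
      using st \<tau>s kN \<tau>_rep[of s] unfolding MP[OF st] MP[OF \<tau>s(2) st(2)]
      by (cases "s < k"; cases "t < k") (auto simp: M_def m_def class_quotient_mat_def algebra_simps)
    finally show "(Q * (M * P)) $$ (s, t) = ?T $$ (s, t)" .
  qed (use M P Q T in auto)
  have "P * ?T * Q = (P * Q) * M * (P * Q)"
    unfolding QMP[symmetric] using M P Q by (simp add: assoc_mult_mat[of _ N N _ N _ N])
  then have "M = P * ?T * Q" using M PQ by simp
  then have "similar_mat M ?T" by (intro similar_matI[OF _ PQ QP]) (use M P Q T in auto)
  then show ?thesis unfolding M_def .
qed

lemma char_poly_blowup: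
  fixes W :: "nat \<Rightarrow> nat \<Rightarrow> 'a::field"
  assumes kN: "k \<le> N" and \<tau>_rep: "\<And>s. s < k \<Longrightarrow> \<tau> s = s" and \<tau>_lt: "\<And>s. s < N \<Longrightarrow> \<tau> s < k"
  shows "char_poly (mat N N (\<lambda>(s, t). if s = t then 0 else W (\<tau> s) (\<tau> t))) =
    char_poly (class_quotient_mat k (\<lambda>j. card {s. s < N \<and> \<tau> s = j}) W) * (\<Prod>s\<in>{k..<N}. [:W (\<tau> s) (\<tau> s), 1:])"
proof -
  let ?B = "class_quotient_mat k (\<lambda>j. card {s. s < N \<and> \<tau> s = j}) W"
  let ?C = "mat k (N - k) (\<lambda>(i, j). W i (\<tau> (j + k)))"
  let ?D = "mat (N - k) (N - k) (\<lambda>(i, j). if i = j then - W (\<tau> (i + k)) (\<tau> (i + k)) else 0)"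
  have "char_poly (mat N N (\<lambda>(s, t). if s = t then 0 else W (\<tau> s) (\<tau> t))) =
      char_poly (four_block_mat ?B ?C (0\<^sub>m (N - k) k) ?D)"
    by (rule char_poly_similar[OF blowup_similar_block_mat[OF assms]])
  also have "\<dots> = char_poly ?B * char_poly ?D"
    by (rule char_poly_four_block_lower_left_zero) (auto simp: class_quotient_mat_def)
  also have "char_poly ?D = (\<Prod>i<N - k. [:W (\<tau> (i + k)) (\<tau> (i + k)), 1:])"
    unfolding char_poly_diag_mat by simp
  also have "\<dots> = (\<Prod>s\<in>{k..<N}. [:W (\<tau> s) (\<tau> s), 1:])"
    using kN prod.shift_bounds_nat_ivl[of "\<lambda>s. [:W (\<tau> s) (\<tau> s), 1:]" 0 k "N - k"]
    by (simp add: atLeast0LessThan)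
  finally show ?thesis .
qed

section \<open>Arrowhead matrices\<close>

lemma char_poly_eq_det:
  assumes "B \<in> carrier_mat k k"
  shows "char_poly B = det (mat k k (\<lambda>(i, j). if i = j then [:- B $$ (i, j), 1:] else [:- B $$ (i, j):]))"
  unfolding char_poly_def using assms
  by (intro arg_cong[where f = det] eq_matI) (auto simp: char_poly_matrix_def)

lemma mat_delete_mat:
  "mat_delete (mat n m f) i j = mat (n - 1) (m - 1) (\<lambda>(a, b). f (insert_index i a, insert_index j b))"
  by (rule eq_matI) (auto simp: mat_delete_def insert_index_def)

lemma det_mat_Suc:
  "det (mat (Suc n) (Suc n) f) =
    (\<Sum>i<Suc n. (-1) ^ i * f (i, 0) * det (mat n n (\<lambda>(a, b). f (insert_index i a, Suc b))))"
  by (subst laplace_expansion_column[where j = 0 and n = "Suc n"])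
    (auto simp: cofactor_def mat_delete_mat intro!: sum.cong)

lemma det_mat_3:
  "det (mat 3 3 f) = (f (0, 0) * (f (1, 1) * f (2, 2) - f (2, 1) * f (1, 2))
     - f (1, 0) * (f (0, 1) * f (2, 2) - f (2, 1) * f (0, 2))
     + f (2, 0) * (f (0, 1) * f (1, 2) - f (1, 1) * f (0, 2)) :: 'a::comm_ring_1)"
  unfolding numeral_3_eq_3 numeral_2_eq_2
  by (simp add: det_mat_Suc insert_index_def lessThan_Suc algebra_simps)

lemma det_mat_4:
  "det (mat 4 4 f) = (\<Sum>i<4. (-1) ^ i * f (i, 0) * det (mat 3 3 (\<lambda>(a, b). f (insert_index i a, Suc b))))"
  using det_mat_Suc[of 3 f] by (simp add: numeral_eq_Suc)

lemma const_poly_mult: "[:a:] * p = Polynomial.smult a p"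
  by simp

lemma char_poly_arrow_3:
  fixes B :: "'a::field mat"
  assumes B: "B \<in> carrier_mat 3 3" and "B $$ (1, 2) = 0" "B $$ (2, 1) = 0"
  shows "char_poly B = [:- B $$ (0, 0), 1:] * [:- B $$ (1, 1), 1:] * [:- B $$ (2, 2), 1:]
     - Polynomial.smult (B $$ (0, 1) * B $$ (1, 0)) [:- B $$ (2, 2), 1:]
     - Polynomial.smult (B $$ (0, 2) * B $$ (2, 0)) [:- B $$ (1, 1), 1:]"
  unfolding char_poly_eq_det[OF B] det_mat_3 using assms(2,3)
  by (simp add: algebra_simps eval_nat_numeral const_poly_mult)

lemma char_poly_arrow_4:
  fixes B :: "'a::field mat"
  assumes B: "B \<in> carrier_mat 4 4"
    and "B $$ (1, 2) = 0" "B $$ (2, 1) = 0" "B $$ (1, 3) = 0" "B $$ (3, 1) = 0" "B $$ (2, 3) = 0" "B $$ (3, 2) = 0"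
  shows "char_poly B = [:- B $$ (0, 0), 1:] * [:- B $$ (1, 1), 1:] * [:- B $$ (2, 2), 1:] * [:- B $$ (3, 3), 1:]
     - Polynomial.smult (B $$ (0, 1) * B $$ (1, 0)) ([:- B $$ (2, 2), 1:] * [:- B $$ (3, 3), 1:])
     - Polynomial.smult (B $$ (0, 2) * B $$ (2, 0)) ([:- B $$ (1, 1), 1:] * [:- B $$ (3, 3), 1:])
     - Polynomial.smult (B $$ (0, 3) * B $$ (3, 0)) ([:- B $$ (1, 1), 1:] * [:- B $$ (2, 2), 1:])"
  unfolding char_poly_eq_det[OF B] det_mat_4 det_mat_3 using assms(2-)
  by (simp add: insert_index_def algebra_simps eval_nat_numeral const_poly_mult)

section \<open>Sombor spectra of label graphs\<close>

definition sombor_weight :: "'v set \<Rightarrow> ('v \<Rightarrow> 'v \<Rightarrow> bool) \<Rightarrow> 'v \<Rightarrow> 'v \<Rightarrow> real" where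
  "sombor_weight V E u w =
    (if E u w then sqrt (real (graph_deg V E u)^2 + real (graph_deg V E w)^2) else 0)"

lemma vertex_enum_bij:
  assumes "finite V"
  shows "bij_betw (vertex_enum V) {..<card V} V"
proof -
  have "\<exists>f. bij_betw f {..<card V} V"
    using ex_bij_betw_nat_finite[OF assms] by (simp add: atLeast0LessThan)
  then show ?thesis unfolding vertex_enum_def by (rule someI_ex)
qed

lemma sombor_spectrum_enum:
  assumes f: "bij_betw f {..<N} V"
  shows "sombor_spectrum V E =
    proots (char_poly (mat N N (\<lambda>(i, j). complex_of_real (sombor_weight V E (f i) (f j)))))"
proof -
  have N: "card V = N" using bij_betw_same_card[OF f] by simp
  have "finite V" using bij_betw_finite[OF f] by simp
  then have enum: "bij_betw (vertex_enum V) {..<N} V" using vertex_enum_bij[of V] N by simp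
  have "map_mat complex_of_real (sombor_matrix V E) =
      mat N N (\<lambda>(i, j). complex_of_real (sombor_weight V E (vertex_enum V i) (vertex_enum V j)))"
    unfolding sombor_matrix_def sombor_weight_def N by (rule eq_matI) (auto simp: Let_def)
  then show ?thesis
    unfolding sombor_spectrum_def
    using char_poly_mat_reindex[OF enum f, of "\<lambda>u w. complex_of_real (sombor_weight V E u w)"] by simp
qed

lemma sombor_spectrum_iso:
  assumes \<phi>: "bij_betw \<phi> V W" and fin: "finite V"
    and adj: "\<And>u v. u \<in> V \<Longrightarrow> v \<in> V \<Longrightarrow> F (\<phi> u) (\<phi> v) \<longleftrightarrow> E u v"
  shows "sombor_spectrum W F = sombor_spectrum V E"
proof -
  have deg: "graph_deg W F (\<phi> u) = graph_deg V E u" if u: "u \<in> V" for u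
  proof -
    have "{w \<in> W. F (\<phi> u) w} = \<phi> ` {v \<in> V. E u v}"
      using \<phi> adj[OF u] by (auto simp: bij_betw_def)
    moreover have "inj_on \<phi> {v \<in> V. E u v}"
      using \<phi> by (auto simp: bij_betw_def intro: inj_on_subset)
    ultimately show ?thesis unfolding graph_deg_def by (simp add: card_image)
  qed
  let ?f = "vertex_enum V"
  have f: "bij_betw ?f {..<card V} V" by (rule vertex_enum_bij[OF fin])
  have f_in: "i < card V \<Longrightarrow> ?f i \<in> V" for i using f by (auto simp: bij_betw_def)
  have "sombor_spectrum W F =
      proots (char_poly (mat (card V) (card V) (\<lambda>(i, j). complex_of_real (sombor_weight W F (\<phi> (?f i)) (\<phi> (?f j))))))"
    using sombor_spectrum_enum[OF bij_betw_trans[OF f \<phi>]] by (simp add: comp_def)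
  also have "mat (card V) (card V) (\<lambda>(i, j). complex_of_real (sombor_weight W F (\<phi> (?f i)) (\<phi> (?f j)))) =
      mat (card V) (card V) (\<lambda>(i, j). complex_of_real (sombor_weight V E (?f i) (?f j)))"
    by (rule eq_matI) (auto simp: sombor_weight_def deg adj f_in)
  also have "proots (char_poly \<dots>) = sombor_spectrum V E"
    by (rule sombor_spectrum_enum[OF f, symmetric])
  finally show ?thesis .
qed

definition label_adj :: "('v \<Rightarrow> nat) \<Rightarrow> 'v \<Rightarrow> 'v \<Rightarrow> bool" where
  "label_adj L u v \<longleftrightarrow> u \<noteq> v \<and> (L u = 0 \<or> L v = 0 \<or> L u = L v)"

definition label_count :: "'v set \<Rightarrow> ('v \<Rightarrow> nat) \<Rightarrow> nat \<Rightarrow> nat" where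
  "label_count V L i = card {v \<in> V. L v = i}"

definition label_deg :: "'v set \<Rightarrow> ('v \<Rightarrow> nat) \<Rightarrow> nat \<Rightarrow> nat" where
  "label_deg V L i = (if i = 0 then card V - 1 else label_count V L 0 + label_count V L i - 1)"

definition label_weight :: "'v set \<Rightarrow> ('v \<Rightarrow> nat) \<Rightarrow> nat \<Rightarrow> nat \<Rightarrow> complex" where
  "label_weight V L i j = complex_of_real
    (if i = 0 \<or> j = 0 \<or> i = j then sqrt (real (label_deg V L i)^2 + real (label_deg V L j)^2) else 0)"

lemma graph_deg_label_adj:
  assumes "finite V" "x \<in> V"
  shows "graph_deg V (label_adj L) x = label_deg V L (L x)"
proof (cases "L x = 0")
  case True
  then have "{v \<in> V. label_adj L x v} = V - {x}" by (auto simp: label_adj_def)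
  then show ?thesis using True assms by (simp add: graph_deg_def label_deg_def)
next
  case False
  then have "{v \<in> V. label_adj L x v} = ({v \<in> V. L v = 0} \<union> {v \<in> V. L v = L x}) - {x}"
    by (auto simp: label_adj_def)
  moreover have "card ({v \<in> V. L v = 0} \<union> {v \<in> V. L v = L x}) = label_count V L 0 + label_count V L (L x)"
    using False assms(1) unfolding label_count_def by (intro card_Un_disjoint) auto
  ultimately show ?thesis using False assms by (simp add: graph_deg_def label_deg_def card_Diff_singleton)
qed

lemma label_weight_diag: "label_weight V L i i = complex_of_real (sqrt 2) * of_nat (label_deg V L i)"
  by (simp add: label_weight_def real_sqrt_mult)

lemma label_weight_central:
  "label_weight V L 0 j * label_weight V L j 0 = of_nat (label_deg V L 0)^2 + of_nat (label_deg V L j)^2"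
proof -
  define x where "x = real (label_deg V L 0)^2 + real (label_deg V L j)^2"
  have "label_weight V L 0 j = complex_of_real (sqrt x)" "label_weight V L j 0 = complex_of_real (sqrt x)"
    unfolding x_def by (simp_all add: label_weight_def add.commute)
  then have "label_weight V L 0 j * label_weight V L j 0 = complex_of_real (sqrt x * sqrt x)"
    by (simp only: of_real_mult)
  also have "\<dots> = complex_of_real x" unfolding x_def by simp
  finally show ?thesis unfolding x_def by simp
qed

lemma label_weight_eq_0: "i \<noteq> 0 \<Longrightarrow> j \<noteq> 0 \<Longrightarrow> i \<noteq> j \<Longrightarrow> label_weight V L i j = 0"
  by (simp add: label_weight_def)

lemma card_filter_bij_betw:
  assumes "bij_betw g A B" "finite A"
  shows "card {a \<in> A. P (g a)} = card {b \<in> B. P b}"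
proof -
  have "finite B" using assms bij_betw_finite by blast
  have "(\<Sum>a\<in>A. of_bool (P (g a)) :: nat) = (\<Sum>b\<in>B. of_bool (P b))"
    by (rule sum.reindex_bij_betw[OF assms(1)])
  then show ?thesis using assms(2) \<open>finite B\<close> by (simp add: Int_def conj_commute)
qed

lemma sum_replicate_mset_singleton: "finite A \<Longrightarrow> (\<Sum>s\<in>A. {#c#}) = replicate_mset (card A) c"
  by (induction A rule: finite_induct) auto

lemma replicate_mset_add: "replicate_mset (a + b) x = replicate_mset a x + replicate_mset b x"
  by (induction a) auto

lemma proots_prod_linear_classes:
  assumes "finite A" "\<And>s. s \<in> A \<Longrightarrow> \<tau> s < (k::nat)"
  shows "proots (\<Prod>s\<in>A. [:c (\<tau> s), 1:]) = (\<Sum>i<k. replicate_mset (card {s \<in> A. \<tau> s = i}) (- c i))"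
proof -
  have "proots (\<Prod>s\<in>A. [:c (\<tau> s), 1:]) = (\<Sum>s\<in>A. {#- c (\<tau> s)#})"
    by (subst proots_prod) (use assms in auto)
  also have "\<dots> = (\<Sum>i<k. \<Sum>s\<in>{s \<in> A. \<tau> s = i}. {#- c i#})"
    using assms by (subst sum.group[symmetric, of _ "{..<k}" \<tau>]) (auto intro!: sum.cong)
  also have "\<dots> = (\<Sum>i<k. replicate_mset (card {s \<in> A. \<tau> s = i}) (- c i))"
    by (intro sum.cong refl sum_replicate_mset_singleton) (use assms(1) in auto)
  finally show ?thesis .
qed

lemma card_class_tail:
  fixes \<tau> :: "nat \<Rightarrow> nat"
  assumes "i < k" "k \<le> N" "\<And>s. s < k \<Longrightarrow> \<tau> s = s"
  shows "card {s \<in> {k..<N}. \<tau> s = i} = card {s. s < N \<and> \<tau> s = i} - 1"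
proof -
  have eq: "{s. s < N \<and> \<tau> s = i} = insert i {s \<in> {k..<N}. \<tau> s = i}"
  proof (intro equalityI subsetI)
    fix s assume "s \<in> {s. s < N \<and> \<tau> s = i}"
    then show "s \<in> insert i {s \<in> {k..<N}. \<tau> s = i}" using assms(3)[of s] by (cases "s < k") auto
  qed (use assms in auto)
  have "i \<notin> {s \<in> {k..<N}. \<tau> s = i}" using assms by auto
  then show ?thesis unfolding eq by (subst card_insert_disjoint) simp_all
qed

lemma sombor_spectrum_label_adj:
  fixes L :: "nat \<Rightarrow> nat"
  assumes g: "bij_betw g {..<N} {..<N}" and kN: "k \<le> N"
    and L_lt: "\<And>t. t < N \<Longrightarrow> L t < k" and rep: "\<And>i. i < k \<Longrightarrow> L (g i) = i"
  shows "sombor_spectrum {..<N} (label_adj L) =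
    proots (char_poly (class_quotient_mat k (label_count {..<N} L) (label_weight {..<N} L)))
    + (\<Sum>i<k. replicate_mset (label_count {..<N} L i - 1) (- label_weight {..<N} L i i))"
proof -
  let ?W = "label_weight {..<N} L" and ?m = "label_count {..<N} L" and ?\<tau> = "\<lambda>s. L (g s)"
  have g_lt: "s < N \<Longrightarrow> g s < N" for s using g by (auto simp: bij_betw_def)
  have g_eq: "s < N \<Longrightarrow> t < N \<Longrightarrow> g s = g t \<longleftrightarrow> s = t" for s t
    using g by (auto simp: bij_betw_def inj_on_def)
  have count: "card {s. s < N \<and> ?\<tau> s = i} = ?m i" for i
    using card_filter_bij_betw[OF g, of "\<lambda>t. L t = i"] by (simp add: label_count_def)
  have "mat N N (\<lambda>(s, t). complex_of_real (sombor_weight {..<N} (label_adj L) (g s) (g t))) =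
      mat N N (\<lambda>(s, t). if s = t then 0 else ?W (?\<tau> s) (?\<tau> t))"
    by (rule eq_matI)
      (auto simp: sombor_weight_def label_weight_def label_adj_def graph_deg_label_adj g_lt g_eq)
  then have "sombor_spectrum {..<N} (label_adj L) =
      proots (char_poly (class_quotient_mat k ?m ?W) * (\<Prod>s\<in>{k..<N}. [:?W (?\<tau> s) (?\<tau> s), 1:]))"
    using sombor_spectrum_enum[OF g] char_poly_blowup[OF kN, of ?\<tau> ?W] rep L_lt g_lt count by simp
  also have "\<dots> = proots (char_poly (class_quotient_mat k ?m ?W)) + proots (\<Prod>s\<in>{k..<N}. [:?W (?\<tau> s) (?\<tau> s), 1:])"
  proof (rule proots_mult)
    have "class_quotient_mat k ?m ?W \<in> carrier_mat k k" by (simp add: class_quotient_mat_def)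
    from degree_monic_char_poly[OF this] show "char_poly (class_quotient_mat k ?m ?W) \<noteq> 0" by auto
  qed simp
  also have "proots (\<Prod>s\<in>{k..<N}. [:?W (?\<tau> s) (?\<tau> s), 1:]) = (\<Sum>i<k. replicate_mset (?m i - 1) (- ?W i i))"
    using proots_prod_linear_classes[of "{k..<N}" ?\<tau> k "\<lambda>i. ?W i i"] L_lt g_lt
      card_class_tail[OF _ kN, of _ ?\<tau>] rep count by simp
  finally show ?thesis .
qed

section \<open>The conjugacy super commuting graph of the generalised quaternion group\<close>

lemma (in group) intertwine_inv:
  assumes b: "b \<in> carrier G" and x: "x \<in> carrier G" and y: "y \<in> carrier G"
    and e: "b \<otimes> x = y \<otimes> b"
  shows "b \<otimes> inv x = inv y \<otimes> b"
proof -
  have "b \<otimes> inv x = inv y \<otimes> (y \<otimes> b) \<otimes> inv x"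
    using b x y by (simp add: m_assoc[symmetric])
  also have "\<dots> = inv y \<otimes> (b \<otimes> x) \<otimes> inv x" using e by simp
  also have "\<dots> = inv y \<otimes> b" using b x y by (simp add: m_assoc)
  finally show ?thesis .
qed

lemma (in group) intertwine_nat_pow:
  assumes b: "b \<in> carrier G" and x: "x \<in> carrier G" and y: "y \<in> carrier G"
    and e: "b \<otimes> x = y \<otimes> b"
  shows "b \<otimes> x [^] (k::nat) = y [^] k \<otimes> b"
proof (induction k)
  case 0 then show ?case using b by simp
next
  case (Suc k)
  have "b \<otimes> x [^] Suc k = (b \<otimes> x [^] k) \<otimes> x" using b x by (simp add: m_assoc)
  also have "\<dots> = y [^] k \<otimes> (b \<otimes> x)" using Suc b x y by (simp add: m_assoc)
  also have "\<dots> = (y [^] k \<otimes> y) \<otimes> b" using e b y by (simp add: m_assoc)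
  finally show ?case by simp
qed

lemma (in group) intertwine_int_pow:
  assumes b: "b \<in> carrier G" and x: "x \<in> carrier G" and y: "y \<in> carrier G"
    and e: "b \<otimes> x = y \<otimes> b"
  shows "b \<otimes> x [^] (i::int) = y [^] i \<otimes> b"
proof (cases "i < 0")
  case True
  have k: "b \<otimes> x [^] (nat (- i)) = y [^] (nat (- i)) \<otimes> b" by (rule intertwine_nat_pow[OF assms])
  have "b \<otimes> inv (x [^] nat (- i)) = inv (y [^] nat (- i)) \<otimes> b"
    by (rule intertwine_inv[OF b nat_pow_closed[OF x] nat_pow_closed[OF y] k])
  thus ?thesis using True by (simp only: int_pow_def2 if_True)
next
  case False
  have k: "b \<otimes> x [^] (nat i) = y [^] (nat i) \<otimes> b" by (rule intertwine_nat_pow[OF assms])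
  thus ?thesis using False by (simp only: int_pow_def2 if_False)
qed

lemma (in group) conj_eq_iff_mult_eq:
  assumes "x \<in> carrier G" "g \<in> carrier G" "h \<in> carrier G"
  shows "h = x \<otimes> g \<otimes> inv x \<longleftrightarrow> h \<otimes> x = x \<otimes> g"
proof
  assume "h = x \<otimes> g \<otimes> inv x"
  then show "h \<otimes> x = x \<otimes> g" using assms by (simp add: m_assoc)
next
  assume "h \<otimes> x = x \<otimes> g"
  moreover have "h = h \<otimes> x \<otimes> inv x" using assms by (simp add: m_assoc)
  ultimately show "h = x \<otimes> g \<otimes> inv x" by simp
qed

lemma double_dvd_double_iff: "2 * m dvd 2 * x \<longleftrightarrow> (m::int) dvd x"
  by (simp add: mult.assoc)

lemma dvd_from_dvd_sum_or_diff:
  fixes m x y :: int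
  assumes "2 * m dvd x - y \<or> 2 * m dvd x + y" and "m dvd x"
  shows "m dvd y"
proof -
  have m: "m dvd 2 * m" by simp
  from assms(1) show ?thesis
  proof
    assume "2 * m dvd x - y"
    then have "m dvd x - (x - y)" using dvd_trans[OF m] assms(2) dvd_diff by blast
    then show ?thesis by simp
  next
    assume "2 * m dvd x + y"
    then have "m dvd (x + y) - x" using dvd_trans[OF m] assms(2) dvd_diff by blast
    then show ?thesis by simp
  qed
qed

lemma bounded_dvd_diff_iff: "0 \<le> x \<Longrightarrow> x < m \<Longrightarrow> 0 \<le> y \<Longrightarrow> y < m \<Longrightarrow> (m::int) dvd x - y \<longleftrightarrow> x = y"
  by (metis mod_eq_dvd_iff mod_pos_pos_trivial dvd_0_right diff_self)

lemma dvd_less_double_iff: "(s::nat) < 2 * n \<Longrightarrow> n dvd s \<longleftrightarrow> s = 0 \<or> s = n"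
proof
  assume s: "s < 2 * n" and "n dvd s"
  then obtain q where q: "s = n * q" by (auto elim: dvdE)
  hence "q < 2" using s by (metis mult.commute nat_mult_less_cancel_disj)
  hence "q = 0 \<or> q = 1" by auto
  thus "s = 0 \<or> s = n" using q by auto
qed auto

text \<open>Index t < 2n stands for a^t and index t \<ge> 2n for a^(t-2n) b. Label 0 marks the centre
  {1, a^n}, label 1 the other powers of a, and a^i b gets label 2 if n is odd and 2 + (i mod 2) if
  n is even.\<close>
definition quaternion_label :: "nat \<Rightarrow> nat \<Rightarrow> nat" where
  "quaternion_label n t =
    (if 2 * n \<le> t then (if odd n then 2 else 2 + t mod 2) else if t = 0 \<or> t = n then 0 else 1)"

locale gen_quaternion = group G for G (structure) +
  fixes a b :: 'g and n :: nat
  assumes n2: "n \<ge> 2" and a: "a \<in> carrier G" and b: "b \<in> carrier G"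
    and gen: "generate G {a, b} = carrier G"
    and card4: "card (carrier G) = 4 * n"
    and a2n: "a [^] (2 * n) = \<one>"
    and an: "a [^] n = b [^] (2::nat)"
    and ba: "b \<otimes> a = inv a \<otimes> b"
begin

definition apow :: "int \<Rightarrow> 'g" where "apow i = a [^] i"

definition elt :: "int \<Rightarrow> bool \<Rightarrow> 'g" where "elt i d = (if d then apow i \<otimes> b else apow i)"

lemma apow_closed[simp]: "apow i \<in> carrier G" unfolding apow_def using a by simp

lemma elt_closed[simp]: "elt i d \<in> carrier G" unfolding elt_def using b by simp

lemma apow_add: "apow (i + j) = apow i \<otimes> apow j" unfolding apow_def using a by (simp add: int_pow_mult)

lemma apow_2n: "apow (2 * int n) = \<one>"
proof -
  have "apow (2 * int n) = a [^] (2 * n)"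
    unfolding apow_def by (metis int_pow_int of_nat_mult of_nat_numeral)
  thus ?thesis using a2n by simp
qed

lemma apow_cong: "2 * int n dvd i - k \<Longrightarrow> apow i = apow k"
proof -
  assume "2 * int n dvd i - k"
  then obtain q where q: "i = k + 2 * int n * q" by (metis dvd_def diff_eq_eq add.commute)
  have "apow (2 * int n * q) = \<one>"
    using apow_2n a unfolding apow_def by (metis int_pow_one int_pow_pow)
  then show "apow i = apow k" unfolding q apow_add by simp
qed

lemma apow_0[simp]: "apow 0 = \<one>" unfolding apow_def by simp

lemma apow_n: "apow (int n) = b \<otimes> b"
  unfolding apow_def using an b by (simp add: int_pow_int numeral_2_eq_2 )

lemma b_apow: "b \<otimes> apow i = apow (- i) \<otimes> b"
proof -
  have "b \<otimes> a [^] i = (inv a) [^] i \<otimes> b"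
    by (rule intertwine_int_pow) (use a b ba in auto)
  thus ?thesis unfolding apow_def using a by (simp add: int_pow_inv int_pow_neg)
qed

lemma elt_mult_FF[simp]: "elt i False \<otimes> elt k False = elt (i + k) False"
  unfolding elt_def by (simp add: apow_add)

lemma elt_mult_FT[simp]: "elt i False \<otimes> elt k True = elt (i + k) True"
  unfolding elt_def using b by (simp add: apow_add m_assoc)

lemma elt_mult_TF[simp]: "elt i True \<otimes> elt k False = elt (i - k) True"
proof -
  have "elt i True \<otimes> elt k False = apow i \<otimes> (b \<otimes> apow k)"
    unfolding elt_def using b by (simp add: m_assoc)
  also have "\<dots> = apow i \<otimes> apow (- k) \<otimes> b" unfolding b_apow using b by (simp add: m_assoc)
  also have "\<dots> = elt (i - k) True" unfolding elt_def apow_add[symmetric] by simp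
  finally show ?thesis .
qed

lemma elt_mult_TT[simp]: "elt i True \<otimes> elt k True = elt (i - k + int n) False"
proof -
  have "elt i True \<otimes> elt k True = apow i \<otimes> (b \<otimes> apow k) \<otimes> b"
    unfolding elt_def using b by (simp add: m_assoc)
  also have "\<dots> = apow i \<otimes> apow (- k) \<otimes> (b \<otimes> b)" unfolding b_apow using b by (simp add: m_assoc)
  also have "\<dots> = elt (i - k + int n) False"
    unfolding elt_def apow_n[symmetric] apow_add[symmetric] by simp
  finally show ?thesis .
qed

lemma elt_cong: "2 * int n dvd i - k \<Longrightarrow> elt i d = elt k d"
  unfolding elt_def using apow_cong by simp

lemma elt_mod: "elt i d = elt (i mod (2 * int n)) d"
  by (rule elt_cong) (simp add: mod_eq_dvd_iff[symmetric])

lemma inv_b: "inv b = elt (int n) True"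
proof -
  have "elt (int n) True \<otimes> b = apow (int n) \<otimes> (b \<otimes> b)" unfolding elt_def using b by (simp add: m_assoc)
  also have "\<dots> = apow (2 * int n)" unfolding apow_n[symmetric] apow_add[symmetric] mult_2 ..
  finally have "elt (int n) True \<otimes> b = \<one>" using apow_2n by simp
  from inv_equality[OF this b elt_closed] show ?thesis .
qed

lemma generate_subset_elt_range: "generate G {a, b} \<subseteq> range (case_prod elt)"
proof
  fix x assume "x \<in> generate G {a, b}"
  then show "x \<in> range (case_prod elt)"
  proof (induction rule: generate.induct)
    case one
    have "\<one> = elt 0 False" by (simp add: elt_def)
    then show ?case by auto
  next
    case (incl h)
    have "a = elt 1 False" "b = elt 0 True" using a b by (simp_all add: elt_def apow_def)
    then show ?case using incl by (auto intro: range_eqI[of _ _ "(_, _)"])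
  next
    case (inv h)
    have "inv a = elt (-1) False" using a by (simp add: elt_def apow_def int_pow_neg)
    then show ?case using inv inv_b by (auto intro: range_eqI[of _ _ "(_, _)"])
  next
    case (eng h1 h2)
    then obtain i d k e where "h1 = elt i d" "h2 = elt k e" by auto
    then show ?case by (cases d; cases e) (auto intro: range_eqI[of _ _ "(_, _)"])
  qed
qed

lemma carrier_elt:
  assumes "x \<in> carrier G"
  obtains i d where "x = elt i d"
proof -
  obtain p where "x = case_prod elt p" using generate_subset_elt_range gen assms by auto
  then show thesis using that by (cases p) simp
qed

lemma elt_image_eq_carrier: "case_prod elt ` ({0..<2 * int n} \<times> UNIV) = carrier G"
proof
  show "carrier G \<subseteq> case_prod elt ` ({0..<2 * int n} \<times> UNIV)"
  proof
    fix x assume "x \<in> carrier G"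
    then obtain i d where "x = elt (i mod (2 * int n)) d" using carrier_elt elt_mod by metis
    moreover have "i mod (2 * int n) \<in> {0..<2 * int n}" using n2 by simp
    ultimately show "x \<in> case_prod elt ` ({0..<2 * int n} \<times> UNIV)" by force
  qed
qed auto

lemma elt_inj_on: "inj_on (case_prod elt) ({0..<2 * int n} \<times> UNIV)"
proof (rule eq_card_imp_inj_on)
  show "card (case_prod elt ` ({0..<2 * int n} \<times> UNIV)) = card ({0..<2 * int n} \<times> (UNIV :: bool set))"
    unfolding elt_image_eq_carrier card4 by (simp add: card_cartesian_product)
qed simp

lemma elt_eq: "elt i d = elt k e \<longleftrightarrow> d = e \<and> 2 * int n dvd i - k"
proof
  assume "elt i d = elt k e"
  then have "elt (i mod (2 * int n)) d = elt (k mod (2 * int n)) e"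
    using elt_mod[of i d] elt_mod[of k e] by simp
  moreover have "0 < 2 * int n" using n2 by simp
  ultimately have "(i mod (2 * int n), d) = (k mod (2 * int n), e)"
    using inj_onD[OF elt_inj_on, of "(i mod (2 * int n), d)" "(k mod (2 * int n), e)"] by auto
  then show "d = e \<and> 2 * int n dvd i - k" by (simp add: mod_eq_dvd_iff)
qed (simp add: elt_cong)

lemma conj_in_elt_iff: "conj_in G (elt i d) (elt k e) \<longleftrightarrow> (\<exists>c f. elt k e \<otimes> elt c f = elt c f \<otimes> elt i d)"
proof -
  have "conj_in G (elt i d) (elt k e) \<longleftrightarrow> (\<exists>x\<in>carrier G. elt k e \<otimes> x = x \<otimes> elt i d)"
    unfolding conj_in_def using conj_eq_iff_mult_eq by auto
  also have "\<dots> \<longleftrightarrow> (\<exists>c f. elt k e \<otimes> elt c f = elt c f \<otimes> elt i d)"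
  proof
    assume "\<exists>x\<in>carrier G. elt k e \<otimes> x = x \<otimes> elt i d"
    then obtain x where x: "x \<in> carrier G" "elt k e \<otimes> x = x \<otimes> elt i d" by blast
    obtain c f where "x = elt c f" using carrier_elt[OF x(1)] .
    with x(2) show "\<exists>c f. elt k e \<otimes> elt c f = elt c f \<otimes> elt i d" by blast
  qed auto
  finally show ?thesis .
qed

lemma conj_in_elt_False:
  "conj_in G (elt i False) (elt k e) \<longleftrightarrow> \<not> e \<and> (2 * int n dvd k - i \<or> 2 * int n dvd k + i)"
proof (cases e)
  case True
  thus ?thesis unfolding conj_in_elt_iff by (auto simp: elt_eq ex_bool_eq)
next
  case False
  have "k + c - (c + i) = k - i" "k + c - (c - i) = k + i" for c :: int by simp_all
  thus ?thesis unfolding conj_in_elt_iff using False by (auto simp: elt_eq ex_bool_eq)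
qed

lemma conj_in_elt_True: "conj_in G (elt i True) (elt k e) \<longleftrightarrow> e \<and> even (k - i)"
proof (cases e)
  case False
  thus ?thesis unfolding conj_in_elt_iff by (auto simp: elt_eq ex_bool_eq)
next
  case True
  have 2: "(2::int) dvd 2 * int n" by simp
  have "(\<exists>c f. elt k True \<otimes> elt c f = elt c f \<otimes> elt i True) \<longleftrightarrow> even (k - i)"
  proof
    assume "\<exists>c f. elt k True \<otimes> elt c f = elt c f \<otimes> elt i True"
    then obtain c f where e: "elt k True \<otimes> elt c f = elt c f \<otimes> elt i True" by auto
    show "even (k - i)"
    proof (cases f)
      case False
      hence "2 * int n dvd k - c - (c + i)" using e by (simp add: elt_eq)
      hence "even (k - c - (c + i))" using 2 dvd_trans by blast
      moreover have "k - c - (c + i) = (k - i) - 2 * c" by simp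
      ultimately show ?thesis by simp
    next
      case True
      hence "2 * int n dvd (k - c + int n) - (c - i + int n)" using e by (simp add: elt_eq)
      hence "even ((k - c + int n) - (c - i + int n))" using 2 dvd_trans by blast
      moreover have "(k - c + int n) - (c - i + int n) = (k - i) + 2 * i - 2 * c" by simp
      ultimately show ?thesis by simp
    qed
  next
    assume ev: "even (k - i)"
    then obtain c where c: "k - i = 2 * c" by (rule evenE)
    have "elt k True \<otimes> elt c False = elt c False \<otimes> elt i True"
      using c by (simp add: elt_eq)
    thus "\<exists>c f. elt k True \<otimes> elt c f = elt c f \<otimes> elt i True" by blast
  qed
  thus ?thesis unfolding conj_in_elt_iff using True by simp
qed

lemma elt_commute_FF: "elt i False \<otimes> elt k False = elt k False \<otimes> elt i False"
  by (simp add: add.commute)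

lemma elt_commute_FT: "elt i False \<otimes> elt k True = elt k True \<otimes> elt i False \<longleftrightarrow> int n dvd i"
proof -
  have e: "i + k - (k - i) = 2 * i" by simp
  show ?thesis unfolding elt_mult_TF elt_mult_FT elt_eq e double_dvd_double_iff by simp
qed

lemma elt_commute_TF: "elt i True \<otimes> elt k False = elt k False \<otimes> elt i True \<longleftrightarrow> int n dvd k"
proof -
  have e: "i - k - (k + i) = 2 * (- k)" by simp
  show ?thesis unfolding elt_mult_TF elt_mult_FT elt_eq e double_dvd_double_iff by simp
qed

lemma elt_commute_TT: "elt i True \<otimes> elt k True = elt k True \<otimes> elt i True \<longleftrightarrow> int n dvd i - k"
proof -
  have e: "i - k + int n - (k - i + int n) = 2 * (i - k)" by simp
  show ?thesis unfolding elt_mult_TT elt_eq e double_dvd_double_iff by simp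
qed

lemma csc_adj_eltI: "elt i d \<noteq> elt k e \<Longrightarrow> conj_in G (elt i d) g' \<Longrightarrow> conj_in G (elt k e) h' \<Longrightarrow> g' \<noteq> h' \<Longrightarrow>
   g' \<otimes> h' = h' \<otimes> g' \<Longrightarrow> csc_adj G (elt i d) (elt k e)"
  unfolding csc_adj_def using elt_closed by blast

lemma csc_adj_eltE:
  assumes "csc_adj G g h" "\<not> conj_in G g h"
  obtains i' d' k' e' where "conj_in G g (elt i' d')" "conj_in G h (elt k' e')"
     "elt i' d' \<otimes> elt k' e' = elt k' e' \<otimes> elt i' d'"
proof -
  from assms obtain g' h' where *: "conj_in G g g'" "conj_in G h h'" "g' \<otimes> h' = h' \<otimes> g'"
    unfolding csc_adj_def by blast
  then have "g' \<in> carrier G" "h' \<in> carrier G" unfolding conj_in_def by auto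
  then obtain i' d' k' e' where "g' = elt i' d'" "h' = elt k' e'" using carrier_elt by meson
  then show thesis using * that by blast
qed

lemma csc_adj_neq: "csc_adj G g h \<Longrightarrow> g \<noteq> h" unfolding csc_adj_def by simp

lemma csc_adj_FF: "csc_adj G (elt i False) (elt k False) \<longleftrightarrow> elt i False \<noteq> elt k False"
proof
  assume "elt i False \<noteq> elt k False"
  moreover have "conj_in G (elt i False) (elt i False)" "conj_in G (elt k False) (elt k False)"
    by (simp_all add: conj_in_elt_False)
  ultimately show "csc_adj G (elt i False) (elt k False)" using csc_adj_eltI elt_commute_FF by blast
qed (rule csc_adj_neq)

lemma csc_adj_FT: "csc_adj G (elt i False) (elt k True) \<longleftrightarrow> int n dvd i"
proof
  assume c: "csc_adj G (elt i False) (elt k True)"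
  have "\<not> conj_in G (elt i False) (elt k True)" by (simp add: conj_in_elt_False)
  then obtain i' d' k' e' where *: "conj_in G (elt i False) (elt i' d')" "conj_in G (elt k True) (elt k' e')"
     "elt i' d' \<otimes> elt k' e' = elt k' e' \<otimes> elt i' d'"
    using csc_adj_eltE[OF c] by metis
  have d': "\<not> d'" and c1: "2 * int n dvd i' - i \<or> 2 * int n dvd i' + i"
    using *(1) by (simp_all add: conj_in_elt_False)
  have e': "e'" using *(2) by (simp add: conj_in_elt_True)
  have "int n dvd i'" using *(3) d' e' elt_commute_FT by simp
  thus "int n dvd i" using dvd_from_dvd_sum_or_diff[OF c1] by blast
next
  assume "int n dvd i"
  moreover have "conj_in G (elt i False) (elt i False)" "conj_in G (elt k True) (elt k True)"
    by (simp_all add: conj_in_elt_False conj_in_elt_True)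
  moreover have "elt i False \<noteq> elt k True" by (simp add: elt_eq)
  ultimately show "csc_adj G (elt i False) (elt k True)" using csc_adj_eltI elt_commute_FT by blast
qed

lemma csc_adj_TF: "csc_adj G (elt i True) (elt k False) \<longleftrightarrow> int n dvd k"
proof
  assume c: "csc_adj G (elt i True) (elt k False)"
  have "\<not> conj_in G (elt i True) (elt k False)" by (simp add: conj_in_elt_True)
  then obtain i' d' k' e' where *: "conj_in G (elt i True) (elt i' d')" "conj_in G (elt k False) (elt k' e')"
     "elt i' d' \<otimes> elt k' e' = elt k' e' \<otimes> elt i' d'"
    using csc_adj_eltE[OF c] by metis
  have e': "\<not> e'" and c1: "2 * int n dvd k' - k \<or> 2 * int n dvd k' + k"
    using *(2) by (simp_all add: conj_in_elt_False)
  have d': "d'" using *(1) by (simp add: conj_in_elt_True)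
  have "int n dvd k'" using *(3) d' e' elt_commute_TF by simp
  thus "int n dvd k" using dvd_from_dvd_sum_or_diff[OF c1] by blast
next
  assume "int n dvd k"
  moreover have "conj_in G (elt i True) (elt i True)" "conj_in G (elt k False) (elt k False)"
    by (simp_all add: conj_in_elt_False conj_in_elt_True)
  moreover have "elt i True \<noteq> elt k False" by (simp add: elt_eq)
  ultimately show "csc_adj G (elt i True) (elt k False)" using csc_adj_eltI elt_commute_TF by blast
qed

lemma csc_adj_TT_even:
  assumes c: "csc_adj G (elt i True) (elt k True)" and ev: "even n"
  shows "even (k - i)"
proof (cases "conj_in G (elt i True) (elt k True)")
  case True
  then show ?thesis by (simp add: conj_in_elt_True)
next
  case False
  then obtain i' d' k' e' where *: "conj_in G (elt i True) (elt i' d')" "conj_in G (elt k True) (elt k' e')"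
     "elt i' d' \<otimes> elt k' e' = elt k' e' \<otimes> elt i' d'"
    using csc_adj_eltE[OF c] by metis
  have d': "d'" "even (i' - i)" using *(1) by (simp_all add: conj_in_elt_True)
  have e': "e'" "even (k' - k)" using *(2) by (simp_all add: conj_in_elt_True)
  have "int n dvd i' - k'" using *(3) d' e' elt_commute_TT by simp
  moreover have "even (int n)" using ev by simp
  ultimately have "even (i' - k')" by (rule dvd_trans[rotated])
  moreover have "k - i = (k - k') + (k' - i') + (i' - i)" by simp
  ultimately show ?thesis using d'(2) e'(2) by simp
qed

lemma csc_adj_TT:
  "csc_adj G (elt i True) (elt k True) \<longleftrightarrow> elt i True \<noteq> elt k True \<and> (odd n \<or> even (k - i))"
proof
  assume c: "csc_adj G (elt i True) (elt k True)"
  then show "elt i True \<noteq> elt k True \<and> (odd n \<or> even (k - i))"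
    using csc_adj_neq csc_adj_TT_even by blast
next
  assume h: "elt i True \<noteq> elt k True \<and> (odd n \<or> even (k - i))"
  show "csc_adj G (elt i True) (elt k True)"
  proof (cases "even (k - i)")
    case True
    then show ?thesis using h unfolding csc_adj_def by (simp add: conj_in_elt_True)
  next
    case False
    then have on: "odd n" using h by simp
    (* For odd n the element a^k b is conjugate to a^(i+n) b, which commutes with a^i b. *)
    have "conj_in G (elt i True) (elt i True)" by (simp add: conj_in_elt_True)
    moreover have "conj_in G (elt k True) (elt (i + int n) True)"
      using on False by (simp add: conj_in_elt_True)
    moreover have "elt i True \<noteq> elt (i + int n) True"
    proof
      assume "elt i True = elt (i + int n) True"
      then have "2 * int n dvd int n" by (simp add: elt_eq)
      moreover have "0 < int n" using n2 by simp
      ultimately show False using zdvd_imp_le by fastforce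
    qed
    moreover have "elt i True \<otimes> elt (i + int n) True = elt (i + int n) True \<otimes> elt i True"
      unfolding elt_commute_TT by simp
    ultimately show ?thesis using h csc_adj_eltI by blast
  qed
qed

definition qenum :: "nat \<Rightarrow> 'g" where "qenum t = elt (int (t mod (2 * n))) (2 * n \<le> t)"

lemma qenum_low: "t < 2 * n \<Longrightarrow> qenum t = elt (int t) False" unfolding qenum_def by simp

lemma qenum_high: "2 * n \<le> t \<Longrightarrow> t < 4 * n \<Longrightarrow> qenum t = elt (int t - 2 * int n) True"
proof -
  assume h: "2 * n \<le> t" "t < 4 * n"
  hence "t mod (2 * n) = t - 2 * n" by (simp add: le_mod_geq)
  thus ?thesis unfolding qenum_def using h by simp
qed

lemma qenum_eq_iff: "s < 4 * n \<Longrightarrow> t < 4 * n \<Longrightarrow> qenum s = qenum t \<longleftrightarrow> s = t"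
proof
  assume st: "s < 4 * n" "t < 4 * n" and e: "qenum s = qenum t"
  show "s = t"
  proof (cases "s < 2 * n"; cases "t < 2 * n")
    assume "s < 2 * n" "t < 2 * n"
    thus ?thesis using e by (simp add: qenum_low elt_eq bounded_dvd_diff_iff)
  next
    assume "s < 2 * n" "\<not> t < 2 * n"
    thus ?thesis using e st by (simp add: qenum_low qenum_high elt_eq)
  next
    assume "\<not> s < 2 * n" "t < 2 * n"
    thus ?thesis using e st by (simp add: qenum_low qenum_high elt_eq)
  next
    assume a: "\<not> s < 2 * n" "\<not> t < 2 * n"
    hence "2 * int n dvd (int s - 2 * int n) - (int t - 2 * int n)"
      using e st by (simp add: qenum_high elt_eq)
    hence "int s - 2 * int n = int t - 2 * int n" using a st by (subst (asm) bounded_dvd_diff_iff) auto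
    thus ?thesis by simp
  qed
qed simp

lemma qenum_bij: "bij_betw qenum {..<4 * n} (carrier G)"
proof -
  have inj: "inj_on qenum {..<4 * n}" using qenum_eq_iff by (auto simp: inj_on_def)
  have sub: "qenum ` {..<4 * n} \<subseteq> carrier G" unfolding qenum_def by auto
  have "card (qenum ` {..<4 * n}) = card (carrier G)" using card_image[OF inj] card4 by simp
  moreover have "finite (carrier G)" using card4 n2 by (intro card_ge_0_finite) simp
  ultimately have "qenum ` {..<4 * n} = carrier G" using sub card_subset_eq by blast
  thus ?thesis using inj by (simp add: bij_betw_def)
qed

lemma csc_adj_qenum:
  assumes st: "s < 4 * n" "t < 4 * n"
  shows "csc_adj G (qenum s) (qenum t) \<longleftrightarrow> label_adj (quaternion_label n) s t"
proof -
  have "csc_adj G (qenum s) (qenum t) \<longleftrightarrow> s \<noteq> t \<and>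
      (quaternion_label n s = 0 \<or> quaternion_label n t = 0 \<or> quaternion_label n s = quaternion_label n t)"
  proof (cases "s < 2 * n"; cases "t < 2 * n")
    assume a: "s < 2 * n" "t < 2 * n"
    have "csc_adj G (qenum s) (qenum t) \<longleftrightarrow> s \<noteq> t"
      using a csc_adj_FF qenum_eq_iff[OF st] by (simp add: qenum_low)
    moreover have "quaternion_label n s = 0 \<or> quaternion_label n t = 0 \<or> quaternion_label n s = quaternion_label n t"
      using a by (simp add: quaternion_label_def)
    ultimately show ?thesis by simp
  next
    assume a: "s < 2 * n" "\<not> t < 2 * n"
    have "csc_adj G (qenum s) (qenum t) \<longleftrightarrow> n dvd s"
      using a st by (simp add: qenum_low qenum_high csc_adj_FT)
    also have "\<dots> \<longleftrightarrow> s = 0 \<or> s = n" using a dvd_less_double_iff by simp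
    finally show ?thesis using a by (auto simp: quaternion_label_def)
  next
    assume a: "\<not> s < 2 * n" "t < 2 * n"
    have "csc_adj G (qenum s) (qenum t) \<longleftrightarrow> n dvd t"
      using a st by (simp add: qenum_low qenum_high csc_adj_TF)
    also have "\<dots> \<longleftrightarrow> t = 0 \<or> t = n" using a dvd_less_double_iff by simp
    finally show ?thesis using a by (auto simp: quaternion_label_def)
  next
    assume a: "\<not> s < 2 * n" "\<not> t < 2 * n"
    have ev: "even ((int t - 2 * int n) - (int s - 2 * int n)) \<longleftrightarrow> (even s \<longleftrightarrow> even t)" by auto
    have "csc_adj G (qenum s) (qenum t) \<longleftrightarrow> s \<noteq> t \<and> (odd n \<or> (even s \<longleftrightarrow> even t))"
      using a st qenum_eq_iff[OF st] ev by (simp add: qenum_high csc_adj_TT)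
    also have "\<dots> \<longleftrightarrow> s \<noteq> t \<and> (quaternion_label n s = 0 \<or> quaternion_label n t = 0 \<or> quaternion_label n s = quaternion_label n t)"
      using a by (auto simp: quaternion_label_def odd_iff_mod_2_eq_one even_iff_mod_2_eq_zero)
    finally show ?thesis .
  qed
  then show ?thesis by (simp add: label_adj_def)
qed

end

text \<open>Swapping 2 with 2n and 3 with 2n + 1 puts a vertex of label i at index i.\<close>
definition quaternion_rep_perm :: "nat \<Rightarrow> nat \<Rightarrow> nat" where
  "quaternion_rep_perm n t = (if t = 2 then 2 * n else if t = 3 then 2 * n + 1 else if t = 2 * n then 2
     else if t = 2 * n + 1 then 3 else t)"

lemma quaternion_rep_perm_bij: "n \<ge> 2 \<Longrightarrow> bij_betw (quaternion_rep_perm n) {..<4 * n} {..<4 * n}"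
  by (rule bij_betw_byWitness[where f' = "quaternion_rep_perm n"]) (auto simp: quaternion_rep_perm_def)

lemma quaternion_label_rep_perm:
  "n \<ge> 2 \<Longrightarrow> i < 3 \<or> even n \<and> i < 4 \<Longrightarrow> quaternion_label n (quaternion_rep_perm n i) = i"
  by (auto simp: quaternion_label_def quaternion_rep_perm_def)

lemma quaternion_label_less: "quaternion_label n t < (if odd n then 3 else 4)"
  by (simp add: quaternion_label_def)

abbreviation quaternion_count :: "nat \<Rightarrow> nat \<Rightarrow> nat" where
  "quaternion_count n \<equiv> label_count {..<4 * n} (quaternion_label n)"

abbreviation quaternion_weight :: "nat \<Rightarrow> nat \<Rightarrow> nat \<Rightarrow> complex" where
  "quaternion_weight n \<equiv> label_weight {..<4 * n} (quaternion_label n)"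

lemma quaternion_count_0: "n \<ge> 2 \<Longrightarrow> quaternion_count n 0 = 2"
proof -
  assume n: "n \<ge> 2"
  then have "{t \<in> {..<4 * n}. quaternion_label n t = 0} = {0, n}" by (auto simp: quaternion_label_def)
  then show ?thesis using n by (simp add: label_count_def)
qed

lemma quaternion_count_1: "n \<ge> 2 \<Longrightarrow> quaternion_count n 1 = 2 * n - 2"
proof -
  assume n: "n \<ge> 2"
  then have "{t \<in> {..<4 * n}. quaternion_label n t = 1} = {..<2 * n} - {0, n}"
    by (auto simp: quaternion_label_def)
  then show ?thesis using n by (simp add: label_count_def card_Diff_subset)
qed

lemma quaternion_count_odd: "odd n \<Longrightarrow> quaternion_count n 2 = 2 * n"
proof -
  assume "odd n"
  then have "{t \<in> {..<4 * n}. quaternion_label n t = 2} = {2 * n..<4 * n}"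
    by (auto simp: quaternion_label_def)
  then show ?thesis by (simp add: label_count_def)
qed

lemma quaternion_count_even:
  assumes "even n" "r < 2"
  shows "quaternion_count n (2 + r) = n"
proof -
  have "{t \<in> {..<4 * n}. quaternion_label n t = 2 + r} = (\<lambda>j. 2 * n + 2 * j + r) ` {..<n}"
  proof (intro equalityI subsetI)
    fix t assume t: "t \<in> {t \<in> {..<4 * n}. quaternion_label n t = 2 + r}"
    then have "2 * n \<le> t" "t mod 2 = r" "t < 4 * n"
      using assms by (auto simp: quaternion_label_def split: if_splits)
    then have "t = 2 * n + 2 * ((t - 2 * n) div 2) + r" "(t - 2 * n) div 2 < n"
      using assms(1) by presburger+
    then show "t \<in> (\<lambda>j. 2 * n + 2 * j + r) ` {..<n}" by blast
  next
    fix t assume "t \<in> (\<lambda>j. 2 * n + 2 * j + r) ` {..<n}"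
    then show "t \<in> {t \<in> {..<4 * n}. quaternion_label n t = 2 + r}"
      using assms by (auto simp: quaternion_label_def) presburger+
  qed
  moreover have "inj_on (\<lambda>j. 2 * n + 2 * j + r) {..<n}" by (auto simp: inj_on_def)
  ultimately show ?thesis by (simp add: label_count_def card_image)
qed

lemma quaternion_weight_odd:
  assumes "n \<ge> 2" "odd n"
  defines "s \<equiv> complex_of_real (sqrt 2)" and "N \<equiv> (of_nat n :: complex)"
  shows "quaternion_weight n 0 0 = s * (4 * N - 1)" "quaternion_weight n 1 1 = s * (2 * N - 1)"
    "quaternion_weight n 2 2 = s * (2 * N + 1)"
    "quaternion_weight n 0 1 * quaternion_weight n 1 0 = (4 * N - 1)^2 + (2 * N - 1)^2"
    "quaternion_weight n 0 2 * quaternion_weight n 2 0 = (4 * N - 1)^2 + (1 + 2 * N)^2"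
proof -
  let ?d = "label_deg {..<4 * n} (quaternion_label n)"
  have d: "?d 0 = 4 * n - 1" "?d 1 = 2 * n - 1" "?d 2 = 2 * n + 1"
    using quaternion_count_0[OF assms(1)] quaternion_count_1[OF assms(1)] quaternion_count_odd[OF assms(2)] assms(1)
    by (simp_all add: label_deg_def)
  have "(of_nat (4 * n - 1) :: complex) = 4 * N - 1" "(of_nat (2 * n - 1) :: complex) = 2 * N - 1"
    using assms(1) unfolding N_def by (simp_all add: of_nat_diff)
  then show "quaternion_weight n 0 0 = s * (4 * N - 1)" "quaternion_weight n 1 1 = s * (2 * N - 1)"
    "quaternion_weight n 2 2 = s * (2 * N + 1)"
    "quaternion_weight n 0 1 * quaternion_weight n 1 0 = (4 * N - 1)^2 + (2 * N - 1)^2"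
    "quaternion_weight n 0 2 * quaternion_weight n 2 0 = (4 * N - 1)^2 + (1 + 2 * N)^2"
    unfolding label_weight_diag label_weight_central d s_def N_def by simp_all
qed

lemma quaternion_weight_even:
  assumes "n \<ge> 2" "even n"
  defines "s \<equiv> complex_of_real (sqrt 2)" and "N \<equiv> (of_nat n :: complex)"
  shows "quaternion_weight n 0 0 = s * (4 * N - 1)" "quaternion_weight n 1 1 = s * (2 * N - 1)"
    "quaternion_weight n 2 2 = s * (N + 1)" "quaternion_weight n 3 3 = s * (N + 1)"
    "quaternion_weight n 0 1 * quaternion_weight n 1 0 = (4 * N - 1)^2 + (2 * N - 1)^2"
    "quaternion_weight n 0 2 * quaternion_weight n 2 0 = (4 * N - 1)^2 + (1 + N)^2"
    "quaternion_weight n 0 3 * quaternion_weight n 3 0 = (4 * N - 1)^2 + (1 + N)^2"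
proof -
  let ?d = "label_deg {..<4 * n} (quaternion_label n)"
  have d: "?d 0 = 4 * n - 1" "?d 1 = 2 * n - 1" "?d 2 = n + 1" "?d 3 = n + 1"
    using quaternion_count_0[OF assms(1)] quaternion_count_1[OF assms(1)]
      quaternion_count_even[OF assms(2), of 0] quaternion_count_even[OF assms(2), of 1] assms(1)
    by (simp_all add: label_deg_def)
  have "(of_nat (4 * n - 1) :: complex) = 4 * N - 1" "(of_nat (2 * n - 1) :: complex) = 2 * N - 1"
    using assms(1) unfolding N_def by (simp_all add: of_nat_diff)
  then show "quaternion_weight n 0 0 = s * (4 * N - 1)" "quaternion_weight n 1 1 = s * (2 * N - 1)"
    "quaternion_weight n 2 2 = s * (N + 1)" "quaternion_weight n 3 3 = s * (N + 1)"
    "quaternion_weight n 0 1 * quaternion_weight n 1 0 = (4 * N - 1)^2 + (2 * N - 1)^2"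
    "quaternion_weight n 0 2 * quaternion_weight n 2 0 = (4 * N - 1)^2 + (1 + N)^2"
    "quaternion_weight n 0 3 * quaternion_weight n 3 0 = (4 * N - 1)^2 + (1 + N)^2"
    unfolding label_weight_diag label_weight_central d s_def N_def by simp_all
qed

lemma char_poly_quaternion_quotient_odd:
  assumes n: "n \<ge> 2" and odd: "odd n"
  defines "s \<equiv> complex_of_real (sqrt 2)" and "N \<equiv> (of_nat n :: complex)"
  defines "p \<equiv> (4*N - 1) * s" and "q \<equiv> (2*N - 1) * (2*N - 3) * s" and "r \<equiv> (2*N - 1) * (2*N + 1) * s"
  shows "char_poly (class_quotient_mat 3 (quaternion_count n) (quaternion_weight n)) =
    [:-p, 1:] * [:-q, 1:] * [:-r, 1:]
      - Polynomial.smult (8 * (N - 1) * (10 * N^2 - 6 * N + 1)) [:-r, 1:]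
      - Polynomial.smult (8 * N * (10 * N^2 - 2 * N + 1)) [:-q, 1:]"
proof -
  let ?m = "quaternion_count n" and ?W = "quaternion_weight n"
  let ?B = "class_quotient_mat 3 ?m ?W"
  note W = quaternion_weight_odd[OF n odd, folded s_def N_def]
  have m: "(of_nat (?m 0) :: complex) = 2" "(of_nat (?m 1) :: complex) = 2 * N - 2"
    "(of_nat (?m 2) :: complex) = 2 * N"
    using quaternion_count_0[OF n] quaternion_count_1[OF n] quaternion_count_odd[OF odd] n
    unfolding N_def by (simp_all add: of_nat_diff)
  have B: "?B \<in> carrier_mat 3 3" by (simp add: class_quotient_mat_def)
  have diag: "?B $$ (0, 0) = (of_nat (?m 0) - 1) * ?W 0 0" "?B $$ (1, 1) = (of_nat (?m 1) - 1) * ?W 1 1"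
    "?B $$ (2, 2) = (of_nat (?m 2) - 1) * ?W 2 2"
    by (rule class_quotient_mat_diag; simp)+
  have arm: "?B $$ (0, 1) * ?B $$ (1, 0) = of_nat (?m 1) * of_nat (?m 0) * (?W 0 1 * ?W 1 0)"
    "?B $$ (0, 2) * ?B $$ (2, 0) = of_nat (?m 2) * of_nat (?m 0) * (?W 0 2 * ?W 2 0)"
    by (rule class_quotient_mat_arm; simp)+
  have z: "?B $$ (1, 2) = 0" "?B $$ (2, 1) = 0"
    by (simp_all add: class_quotient_mat_eq_0 label_weight_eq_0)
  have "?B $$ (0, 0) = p" unfolding diag(1) m W p_def by simp
  moreover have "?B $$ (1, 1) = q" unfolding diag(2) m W q_def by (simp add: algebra_simps)
  moreover have "?B $$ (2, 2) = r" unfolding diag(3) m W r_def by (simp add: algebra_simps)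
  moreover have "?B $$ (0, 1) * ?B $$ (1, 0) = 8 * (N - 1) * (10 * N^2 - 6 * N + 1)"
    unfolding arm(1) m W by (simp add: algebra_simps power2_eq_square)
  moreover have "?B $$ (0, 2) * ?B $$ (2, 0) = 8 * N * (10 * N^2 - 2 * N + 1)"
    unfolding arm(2) m W by (simp add: algebra_simps power2_eq_square)
  ultimately show ?thesis unfolding char_poly_arrow_3[OF B z] by (simp only:)
qed

lemma char_poly_quaternion_quotient_even:
  assumes n: "n \<ge> 2" and ev: "even n"
  defines "s \<equiv> complex_of_real (sqrt 2)" and "N \<equiv> (of_nat n :: complex)"
  defines "p \<equiv> (4*N - 1) * s" and "d \<equiv> (N - 1) * (N + 1) * s" and "q \<equiv> (2*N - 1) * (2*N - 3) * s"
  shows "char_poly (class_quotient_mat 4 (quaternion_count n) (quaternion_weight n)) =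
    [:-p, 1:] * [:-d, 1:]^2 * [:-q, 1:]
      - Polynomial.smult (8 * (N - 1) * (10 * N^2 - 6 * N + 1)) ([:-d, 1:]^2)
      - Polynomial.smult (4 * N * (17 * N^2 - 6 * N + 2)) ([:-q, 1:] * [:-d, 1:])"
proof -
  let ?m = "quaternion_count n" and ?W = "quaternion_weight n"
  let ?B = "class_quotient_mat 4 ?m ?W"
  note W = quaternion_weight_even[OF n ev, folded s_def N_def]
  have m: "(of_nat (?m 0) :: complex) = 2" "(of_nat (?m 1) :: complex) = 2 * N - 2"
    "(of_nat (?m 2) :: complex) = N" "(of_nat (?m 3) :: complex) = N"
    using quaternion_count_0[OF n] quaternion_count_1[OF n]
      quaternion_count_even[OF ev, of 0] quaternion_count_even[OF ev, of 1] n
    unfolding N_def by (simp_all add: of_nat_diff)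
  have B: "?B \<in> carrier_mat 4 4" by (simp add: class_quotient_mat_def)
  have diag: "?B $$ (0, 0) = (of_nat (?m 0) - 1) * ?W 0 0" "?B $$ (1, 1) = (of_nat (?m 1) - 1) * ?W 1 1"
    "?B $$ (2, 2) = (of_nat (?m 2) - 1) * ?W 2 2" "?B $$ (3, 3) = (of_nat (?m 3) - 1) * ?W 3 3"
    by (rule class_quotient_mat_diag; simp)+
  have arm: "?B $$ (0, 1) * ?B $$ (1, 0) = of_nat (?m 1) * of_nat (?m 0) * (?W 0 1 * ?W 1 0)"
    "?B $$ (0, 2) * ?B $$ (2, 0) = of_nat (?m 2) * of_nat (?m 0) * (?W 0 2 * ?W 2 0)"
    "?B $$ (0, 3) * ?B $$ (3, 0) = of_nat (?m 3) * of_nat (?m 0) * (?W 0 3 * ?W 3 0)"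
    by (rule class_quotient_mat_arm; simp)+
  have z: "?B $$ (1, 2) = 0" "?B $$ (2, 1) = 0" "?B $$ (1, 3) = 0" "?B $$ (3, 1) = 0"
    "?B $$ (2, 3) = 0" "?B $$ (3, 2) = 0"
    by (simp_all add: class_quotient_mat_eq_0 label_weight_eq_0)
  have "?B $$ (0, 0) = p" unfolding diag(1) m W p_def by simp
  moreover have "?B $$ (1, 1) = q" unfolding diag(2) m W q_def by (simp add: algebra_simps)
  moreover have "?B $$ (2, 2) = d" "?B $$ (3, 3) = d"
    unfolding diag(3) diag(4) m W d_def by (simp_all add: algebra_simps)
  moreover have "?B $$ (0, 1) * ?B $$ (1, 0) = 8 * (N - 1) * (10 * N^2 - 6 * N + 1)"
    unfolding arm(1) m W by (simp add: algebra_simps power2_eq_square)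
  moreover have "?B $$ (0, 2) * ?B $$ (2, 0) = 2 * N * (17 * N^2 - 6 * N + 2)"
    "?B $$ (0, 3) * ?B $$ (3, 0) = 2 * N * (17 * N^2 - 6 * N + 2)"
    unfolding arm(2) arm(3) m W by (simp_all add: algebra_simps power2_eq_square)
  ultimately have "char_poly ?B = [:-p, 1:] * [:-q, 1:] * [:-d, 1:] * [:-d, 1:]
      - Polynomial.smult (8 * (N - 1) * (10 * N^2 - 6 * N + 1)) ([:-d, 1:] * [:-d, 1:])
      - Polynomial.smult (2 * N * (17 * N^2 - 6 * N + 2)) ([:-q, 1:] * [:-d, 1:])
      - Polynomial.smult (2 * N * (17 * N^2 - 6 * N + 2)) ([:-q, 1:] * [:-d, 1:])"
    unfolding char_poly_arrow_4[OF B z] by (simp only:)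
  also have "\<dots> = [:-p, 1:] * [:-d, 1:]^2 * [:-q, 1:]
      - Polynomial.smult (8 * (N - 1) * (10 * N^2 - 6 * N + 1)) ([:-d, 1:]^2)
      - Polynomial.smult (4 * N * (17 * N^2 - 6 * N + 2)) ([:-q, 1:] * [:-d, 1:])"
    by (simp add: algebra_simps power2_eq_square flip: smult_add_left)
  finally show ?thesis .
qed

context gen_quaternion
begin

lemma sombor_spectrum_csc_adj:
  "sombor_spectrum (carrier G) (csc_adj G) = sombor_spectrum {..<4 * n} (label_adj (quaternion_label n))"
  by (rule sombor_spectrum_iso[OF qenum_bij]) (simp_all add: csc_adj_qenum)

lemma sombor_spectrum_odd:
  assumes odd: "odd n"
  defines "s \<equiv> complex_of_real (sqrt 2)" and "N \<equiv> (of_nat n :: complex)"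
  defines "p \<equiv> (4*N - 1) * s" and "q \<equiv> (2*N - 1) * (2*N - 3) * s" and "r \<equiv> (2*N - 1) * (2*N + 1) * s"
  shows "sombor_spectrum (carrier G) (csc_adj G) =
            replicate_mset 1 (- (4*N - 1) * s)
          + replicate_mset (2*n - 3) (- (2*N - 1) * s)
          + replicate_mset (2*n - 1) (- (2*N + 1) * s)
          + proots ([:-p, 1:] * [:-q, 1:] * [:-r, 1:]
                    - Polynomial.smult (8 * (N - 1) * (10 * N^2 - 6 * N + 1)) [:-r, 1:]
                    - Polynomial.smult (8 * N * (10 * N^2 - 2 * N + 1)) [:-q, 1:])"
proof -
  let ?m = "quaternion_count n" and ?W = "quaternion_weight n"
  have "sombor_spectrum (carrier G) (csc_adj G) =
      proots (char_poly (class_quotient_mat 3 ?m ?W)) + (\<Sum>i<3. replicate_mset (?m i - 1) (- ?W i i))"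
    unfolding sombor_spectrum_csc_adj
    by (rule sombor_spectrum_label_adj[OF quaternion_rep_perm_bij[OF n2]])
      (use n2 odd quaternion_label_less[of n] quaternion_label_rep_perm[OF n2] in auto)
  moreover have "(\<Sum>i<3. replicate_mset (?m i - 1) (- ?W i i)) = replicate_mset 1 (- (4*N - 1) * s)
      + replicate_mset (2*n - 3) (- (2*N - 1) * s) + replicate_mset (2*n - 1) (- (2*N + 1) * s)"
  proof -
    have sum3: "(\<Sum>i<3. g i) = g 0 + g 1 + g 2" for g :: "nat \<Rightarrow> complex multiset"
      by (simp add: numeral_eq_Suc add.assoc)
    have "2 * n - 2 - 1 = 2 * n - 3" by simp
    then show ?thesis
      unfolding sum3 quaternion_count_0[OF n2] quaternion_count_1[OF n2] quaternion_count_odd[OF odd]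
        quaternion_weight_odd(1-3)[OF n2 odd, folded s_def N_def]
      by (simp add: algebra_simps)
  qed
  ultimately show ?thesis
    unfolding char_poly_quaternion_quotient_odd[OF n2 odd, folded s_def N_def, folded p_def q_def r_def]
    by (simp add: ac_simps)
qed

lemma sombor_spectrum_even:
  assumes ev: "even n"
  defines "s \<equiv> complex_of_real (sqrt 2)" and "N \<equiv> (of_nat n :: complex)"
  defines "p \<equiv> (4*N - 1) * s" and "d \<equiv> (N - 1) * (N + 1) * s" and "q \<equiv> (2*N - 1) * (2*N - 3) * s"
  shows "sombor_spectrum (carrier G) (csc_adj G) =
            replicate_mset 1 (- (4*N - 1) * s)
          + replicate_mset (2*n - 3) (- (2*N - 1) * s)
          + replicate_mset (2*n - 2) (- (N + 1) * s)
          + proots ([:-p, 1:] * [:-d, 1:]^2 * [:-q, 1:]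
                    - Polynomial.smult (8 * (N - 1) * (10 * N^2 - 6 * N + 1)) ([:-d, 1:]^2)
                    - Polynomial.smult (4 * N * (17 * N^2 - 6 * N + 2)) ([:-q, 1:] * [:-d, 1:]))"
proof -
  let ?m = "quaternion_count n" and ?W = "quaternion_weight n"
  have "sombor_spectrum (carrier G) (csc_adj G) =
      proots (char_poly (class_quotient_mat 4 ?m ?W)) + (\<Sum>i<4. replicate_mset (?m i - 1) (- ?W i i))"
    unfolding sombor_spectrum_csc_adj
    by (rule sombor_spectrum_label_adj[OF quaternion_rep_perm_bij[OF n2]])
      (use n2 ev quaternion_label_less[of n] quaternion_label_rep_perm[OF n2] in auto)
  moreover have "(\<Sum>i<4. replicate_mset (?m i - 1) (- ?W i i)) = replicate_mset 1 (- (4*N - 1) * s)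
      + replicate_mset (2*n - 3) (- (2*N - 1) * s) + replicate_mset (2*n - 2) (- (N + 1) * s)"
  proof -
    have sum4: "(\<Sum>i<4. g i) = g 0 + g 1 + (g 2 + g 3)" for g :: "nat \<Rightarrow> complex multiset"
      by (simp add: numeral_eq_Suc add.assoc)
    have "2 * n - 2 = (n - 1) + (n - 1)" using n2 by simp
    then have rep: "replicate_mset (n - 1) x + replicate_mset (n - 1) x = replicate_mset (2 * n - 2) x"
      for x :: complex
      by (simp add: replicate_mset_add)
    have "2 * n - 2 - 1 = 2 * n - 3" by simp
    then show ?thesis
      unfolding sum4 quaternion_count_0[OF n2] quaternion_count_1[OF n2]
        quaternion_count_even[OF ev, of 0, simplified] quaternion_count_even[OF ev, of 1, simplified]
        quaternion_weight_even(1-4)[OF n2 ev, folded s_def N_def] rep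
      by (simp add: algebra_simps)
  qed
  ultimately show ?thesis
    unfolding char_poly_quaternion_quotient_even[OF n2 ev, folded s_def N_def, folded p_def d_def q_def]
    by (simp add: ac_simps)
qed

end

theorem corollary4p8:
  fixes G :: "('g, 'b) monoid_scheme" and a b :: 'g and n :: nat
  assumes "group G" and "n \<ge> 2"
    and "a \<in> carrier G" and "b \<in> carrier G"
    and "generate G {a, b} = carrier G"
    and "card (carrier G) = 4 * n"
    and "a [^]\<^bsub>G\<^esub> (2 * n) = \<one>\<^bsub>G\<^esub>"
    and "a [^]\<^bsub>G\<^esub> n = b [^]\<^bsub>G\<^esub> (2::nat)"
    and "b \<otimes>\<^bsub>G\<^esub> a = inv\<^bsub>G\<^esub> a \<otimes>\<^bsub>G\<^esub> b"
  shows
   "(odd n \<longrightarrow>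
      (let s = complex_of_real (sqrt 2); N = (of_nat n :: complex);
           p = (4*N - 1) * s; q = (2*N - 1) * (2*N - 3) * s; r = (2*N - 1) * (2*N + 1) * s
       in sombor_spectrum (carrier G) (csc_adj G) =
            replicate_mset 1 (- (4*N - 1) * s)
          + replicate_mset (2*n - 3) (- (2*N - 1) * s)
          + replicate_mset (2*n - 1) (- (2*N + 1) * s)
          + proots ([:-p, 1:] * [:-q, 1:] * [:-r, 1:]
                    - Polynomial.smult (8 * (N - 1) * (10 * N^2 - 6 * N + 1)) [:-r, 1:]
                    - Polynomial.smult (8 * N * (10 * N^2 - 2 * N + 1)) [:-q, 1:])))
    \<and> (even n \<longrightarrow>
      (let s = complex_of_real (sqrt 2); N = (of_nat n :: complex);
           p = (4*N - 1) * s; d = (N - 1) * (N + 1) * s; q = (2*N - 1) * (2*N - 3) * s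
       in sombor_spectrum (carrier G) (csc_adj G) =
            replicate_mset 1 (- (4*N - 1) * s)
          + replicate_mset (2*n - 3) (- (2*N - 1) * s)
          + replicate_mset (2*n - 2) (- (N + 1) * s)
          + proots ([:-p, 1:] * [:-d, 1:]^2 * [:-q, 1:]
                    - Polynomial.smult (8 * (N - 1) * (10 * N^2 - 6 * N + 1)) ([:-d, 1:]^2)
                    - Polynomial.smult (4 * N * (17 * N^2 - 6 * N + 2)) ([:-q, 1:] * [:-d, 1:]))))"
proof -
  interpret gen_quaternion G a b n
    using assms by (intro gen_quaternion.intro gen_quaternion_axioms.intro) auto
  show ?thesis unfolding Let_def using sombor_spectrum_odd sombor_spectrum_even by blast
qed

end
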